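(* The detour sequence of every unicyclic graph is full; that is, if $G$ is a connected graph containing exactly one cycle and $d_1\le d_2\le \cdots\le d_n$ is its detour sequence, then every integer $k$ with $d_1\le k\le d_n$ equals some $d_j$.
   Context: All graphs are finite and simple. A unicyclic graph is a connected graph with exactly one cycle. The order of a path is its number of vertices. For a vertex $v$ of $G$, $\tau(v)$ is the order of a longest path in $G$ having $v$ as an endvertex. The detour sequence of $G$ is the nondecreasing sequence of the values $\tau(v)$, $v\in V(G)$ (one term per vertex). *)

theory Defs
  imports Main "HOL-Library.Multiset"
begin

definition simple_graph :: "'a set \<Rightarrow> ('a \<Rightarrow> 'a \<Rightarrow> bool) \<Rightarrow> bool" where
  "simple_graph V E \<longleftrightarrow> finite V \<and> (\<forall>x y. E x y \<longrightarrow> x \<in> V \<and> y \<in> V)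
     \<and> (\<forall>x y. E x y \<longrightarrow> E y x) \<and> (\<forall>x. \<not> E x x)"

(* A path, given as its (nonempty) list of distinct vertices; its order is the length. *)
definition is_path :: "'a set \<Rightarrow> ('a \<Rightarrow> 'a \<Rightarrow> bool) \<Rightarrow> 'a list \<Rightarrow> bool" where
  "is_path V E p \<longleftrightarrow> p \<noteq> [] \<and> distinct p \<and> set p \<subseteq> V
     \<and> (\<forall>i. Suc i < length p \<longrightarrow> E (p ! i) (p ! Suc i))"

definition connected_graph :: "'a set \<Rightarrow> ('a \<Rightarrow> 'a \<Rightarrow> bool) \<Rightarrow> bool" where
  "connected_graph V E \<longleftrightarrow> V \<noteq> {} \<and>
     (\<forall>x\<in>V. \<forall>y\<in>V. \<exists>p. is_path V E p \<and> hd p = x \<and> last p = y)"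

definition is_cycle_seq :: "'a set \<Rightarrow> ('a \<Rightarrow> 'a \<Rightarrow> bool) \<Rightarrow> 'a list \<Rightarrow> bool" where
  "is_cycle_seq V E c \<longleftrightarrow> length c \<ge> 3 \<and> is_path V E c \<and> E (last c) (hd c)"

(* The edge set of the cycle (as unordered pairs encoded by two-element sets);
   the cycle as a subgraph is determined by this edge set. *)
definition cycle_edges :: "'a list \<Rightarrow> 'a set set" where
  "cycle_edges c = {{c ! i, c ! ((Suc i) mod length c)} | i. i < length c}"

definition cycles :: "'a set \<Rightarrow> ('a \<Rightarrow> 'a \<Rightarrow> bool) \<Rightarrow> 'a set set set" where
  "cycles V E = {cycle_edges c | c. is_cycle_seq V E c}"

definition unicyclic :: "'a set \<Rightarrow> ('a \<Rightarrow> 'a \<Rightarrow> bool) \<Rightarrow> bool" where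
  "unicyclic V E \<longleftrightarrow> simple_graph V E \<and> connected_graph V E \<and> card (cycles V E) = 1"

definition tau :: "'a set \<Rightarrow> ('a \<Rightarrow> 'a \<Rightarrow> bool) \<Rightarrow> 'a \<Rightarrow> nat" where
  "tau V E v = Max {length p | p. is_path V E p \<and> hd p = v}"

definition detour_sequence :: "'a set \<Rightarrow> ('a \<Rightarrow> 'a \<Rightarrow> bool) \<Rightarrow> nat list" where
  "detour_sequence V E = sorted_list_of_multiset (image_mset (tau V E) (mset_set V))"

end

theory Submission
  imports Defs
begin

text \<open>
  Let xy be an edge with \<tau>(y) \<ge> \<tau>(x) + 2 and let P be a longest path starting at y. Then x
  lies on P (otherwise xP would be longer than \<tau>(x)) at distance at least 2 from y, so the
  edge xy closes a cycle C with the initial segment of P up to x. In a unicyclic graph C is the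
  only cycle, and since every edge along which \<tau> jumps by 2 lies on a cycle, \<tau> changes by at
  most 1 along the part of P behind x, which avoids C. That part ends at a vertex z with
  \<tau>(z) \<ge> |P| = \<tau>(y), because P reversed starts at z. So every value between \<tau>(x) and \<tau>(y) is
  attained. Consequently the values between the \<tau>-values of the ends of any edge are attained,
  and walking along a path from a vertex of minimal to one of maximal \<tau> fills the whole range.
\<close>

lemma simple_graphD:
  assumes "simple_graph V E"
  shows "finite V" and "E x y \<Longrightarrow> x \<in> V" and "E x y \<Longrightarrow> y \<in> V"
    and "E x y \<Longrightarrow> E y x" and "\<not> E x x"
  using assms unfolding simple_graph_def by blast+

lemma is_path_Cons:
  assumes "is_path V E p" "x \<in> V" "x \<notin> set p" "E x (hd p)"
  shows "is_path V E (x # p)"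
  unfolding is_path_def
proof (intro conjI allI impI)
  fix i assume "Suc i < length (x # p)"
  then show "E ((x # p) ! i) ((x # p) ! Suc i)"
    using assms unfolding is_path_def by (cases i) (auto simp: hd_conv_nth)
qed (use assms in \<open>auto simp: is_path_def\<close>)

lemma is_path_drop:
  assumes "is_path V E p" "j < length p"
  shows "is_path V E (drop j p)"
  using assms unfolding is_path_def by (auto dest: in_set_dropD)

lemma is_path_take:
  assumes "is_path V E p" "0 < n"
  shows "is_path V E (take n p)"
  using assms unfolding is_path_def by (auto dest: in_set_takeD)

lemma is_path_rev:
  assumes "simple_graph V E" "is_path V E p"
  shows "is_path V E (rev p)"
  unfolding is_path_def
proof (intro conjI allI impI)
  fix i assume i: "Suc i < length (rev p)"
  then have "E (p ! (length p - Suc (Suc i))) (p ! Suc (length p - Suc (Suc i)))"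
    using assms(2) unfolding is_path_def by auto
  moreover have "Suc (length p - Suc (Suc i)) = length p - Suc i"
    using i by simp
  ultimately show "E (rev p ! i) (rev p ! Suc i)"
    using i simple_graphD(4)[OF assms(1)] by (simp add: rev_nth)
qed (use assms in \<open>auto simp: is_path_def\<close>)

lemma is_path_length_le_card:
  assumes "simple_graph V E" "is_path V E p"
  shows "length p \<le> card V"
proof -
  have "length p = card (set p)"
    using assms(2) distinct_card[of p] unfolding is_path_def by simp
  also have "\<dots> \<le> card V"
    using assms simple_graphD(1)[OF assms(1)] unfolding is_path_def by (simp add: card_mono)
  finally show ?thesis .
qed

lemma finite_path_lengths:
  assumes "simple_graph V E"
  shows "finite {length p | p. is_path V E p \<and> hd p = v}"
  by (rule finite_subset[of _ "{..card V}"]) (use is_path_length_le_card[OF assms] in auto)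

lemma length_le_tau:
  assumes "simple_graph V E" "is_path V E p"
  shows "length p \<le> tau V E (hd p)"
  unfolding tau_def by (rule Max_ge[OF finite_path_lengths[OF assms(1)]]) (use assms(2) in auto)

lemma tau_attained:
  assumes "simple_graph V E" "v \<in> V"
  obtains p where "is_path V E p" "hd p = v" "length p = tau V E v"
proof -
  have "is_path V E [v]"
    using assms(2) unfolding is_path_def by auto
  then have "{length p | p. is_path V E p \<and> hd p = v} \<noteq> {}"
    by force
  from Max_in[OF finite_path_lengths[OF assms(1)] this] show ?thesis
    using that unfolding tau_def by auto
qed

lemma cycle_edges_subset:
  assumes "e \<in> cycle_edges c"
  shows "e \<subseteq> set c"
proof -
  obtain i where i: "i < length c" "e = {c ! i, c ! (Suc i mod length c)}"
    using assms unfolding cycle_edges_def by blast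
  then have "Suc i mod length c < length c"
    by (metis mod_less_divisor gr_implies_not0 not_gr0)
  then show ?thesis
    using i by auto
qed

lemma is_cycle_seq_take:
  assumes P: "is_path V E P" and j: "2 \<le> j" "j < length P" and closing: "E (P ! j) (hd P)"
  shows "is_cycle_seq V E (take (Suc j) P)" and "{P ! j, hd P} \<in> cycle_edges (take (Suc j) P)"
proof -
  let ?c = "take (Suc j) P"
  have len: "length ?c = Suc j"
    using j by simp
  have "P \<noteq> []"
    using j(2) by (metis less_zeroE list.size(3))
  then have ends: "last ?c = P ! j" "hd ?c = hd P"
    using len by (simp_all add: last_conv_nth hd_conv_nth)
  then show "is_cycle_seq V E ?c"
    unfolding is_cycle_seq_def using j closing is_path_take[OF P] by simp
  have "{?c ! j, ?c ! (Suc j mod length ?c)} \<in> cycle_edges ?c"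
    unfolding cycle_edges_def using len by (intro CollectI exI[of _ j]) simp
  then show "{P ! j, hd P} \<in> cycle_edges ?c"
    using len j \<open>P \<noteq> []\<close> by (simp add: hd_conv_nth)
qed

lemma longest_path_contains_jump_neighbour:
  assumes sg: "simple_graph V E" and xy: "E x y" and jump: "tau V E x + 2 \<le> tau V E y"
    and P: "is_path V E P" "hd P = y" "length P = tau V E y"
  obtains j where "2 \<le> j" "j < length P" "P ! j = x"
proof -
  have "x \<in> set P"
  proof (rule ccontr)
    assume "x \<notin> set P"
    then have "is_path V E (x # P)"
      using is_path_Cons[OF P(1)] simple_graphD(2)[OF sg xy] xy P(2) by auto
    from length_le_tau[OF sg this] show False
      using jump P(3) by simp
  qed
  then obtain j where j: "j < length P" "P ! j = x"
    by (auto simp: in_set_conv_nth)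
  have "j \<noteq> 0"
  proof
    assume "j = 0"
    then have "x = y"
      using j P(2) by (auto simp: hd_conv_nth)
    then show False
      using xy simple_graphD(5)[OF sg] by simp
  qed
  moreover have "j \<noteq> 1"
  proof
    assume "j = 1"
    with length_le_tau[OF sg is_path_drop[OF P(1) j(1)]] show False
      using j jump P(3) by (simp add: hd_drop_conv_nth)
  qed
  ultimately have "2 \<le> j"
    by linarith
  with j show ?thesis
    using that by blast
qed

lemma tau_jump_edge_on_cycle:
  assumes sg: "simple_graph V E" and xy: "E x y" and jump: "tau V E x + 2 \<le> tau V E y"
  obtains c where "is_cycle_seq V E c" "{x, y} \<in> cycle_edges c"
proof -
  obtain P where P: "is_path V E P" "hd P = y" "length P = tau V E y"
    using tau_attained[OF sg simple_graphD(3)[OF sg xy]] .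
  obtain j where j: "2 \<le> j" "j < length P" "P ! j = x"
    using longest_path_contains_jump_neighbour[OF sg xy jump P] .
  show ?thesis
    using that is_cycle_seq_take[OF P(1) j(1,2)] xy j(3) P(2) by simp
qed

lemma unicyclic_cycle_edges_eq:
  assumes "unicyclic V E" "is_cycle_seq V E c" "is_cycle_seq V E c'"
  shows "cycle_edges c = cycle_edges c'"
proof -
  have "card (cycles V E) = 1"
    using assms(1) unfolding unicyclic_def by simp
  then obtain C where "cycles V E = {C}"
    by (rule card_1_singletonE)
  moreover have "cycle_edges c \<in> cycles V E" "cycle_edges c' \<in> cycles V E"
    using assms(2,3) unfolding cycles_def by blast+
  ultimately show ?thesis
    by simp
qed

lemma unicyclic_tau_step_off_cycle:
  assumes u: "unicyclic V E" and c: "is_cycle_seq V E c" and uw: "E u w" and off: "w \<notin> set c"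
  shows "tau V E w \<le> tau V E u + 1 \<and> tau V E u \<le> tau V E w + 1"
proof (rule ccontr)
  assume jump: "\<not> ?thesis"
  have sg: "simple_graph V E"
    using u unfolding unicyclic_def by simp
  consider "tau V E u + 2 \<le> tau V E w" | "tau V E w + 2 \<le> tau V E u"
    using jump by linarith
  then obtain c' where "is_cycle_seq V E c'" "{u, w} \<in> cycle_edges c'"
  proof cases
    case 1
    then show ?thesis
      using tau_jump_edge_on_cycle[OF sg uw] that by blast
  next
    case 2
    then show ?thesis
      using tau_jump_edge_on_cycle[OF sg simple_graphD(4)[OF sg uw]] that insert_commute by metis
  qed
  then have "{u, w} \<in> cycle_edges c"
    using unicyclic_cycle_edges_eq[OF u c] by simp
  then show False
    using cycle_edges_subset off by blast
qed

lemma interval_chain_subset: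
  fixes g :: "nat \<Rightarrow> 'b::linorder"
  assumes "g 0 \<in> S"
    and "\<And>i. i < n \<Longrightarrow> {min (g i) (g (Suc i))..max (g i) (g (Suc i))} \<subseteq> S"
  shows "{min (g 0) (g n)..max (g 0) (g n)} \<subseteq> S"
  using assms(2)
proof (induction n)
  case 0
  then show ?case
    using assms(1) by simp
next
  case (Suc n)
  have "{min (g 0) (g (Suc n))..max (g 0) (g (Suc n))} \<subseteq>
      {min (g 0) (g n)..max (g 0) (g n)} \<union> {min (g n) (g (Suc n))..max (g n) (g (Suc n))}"
    by (auto simp: min_def max_def)
  moreover have "{min (g 0) (g n)..max (g 0) (g n)} \<subseteq> S"
    using Suc by simp
  moreover have "{min (g n) (g (Suc n))..max (g n) (g (Suc n))} \<subseteq> S"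
    using Suc.prems by simp
  ultimately show ?case
    by blast
qed

lemma is_path_interval_subset:
  fixes f :: "'a \<Rightarrow> 'b::linorder"
  assumes p: "is_path V E p" and "f (hd p) \<in> S"
    and edge: "\<And>u w. E u w \<Longrightarrow> {min (f u) (f w)..max (f u) (f w)} \<subseteq> S"
  shows "{min (f (hd p)) (f (last p))..max (f (hd p)) (f (last p))} \<subseteq> S"
proof -
  let ?g = "\<lambda>i. f (p ! i)" and ?n = "length p - 1"
  have "p \<noteq> []"
    using p unfolding is_path_def by simp
  have "{min (?g i) (?g (Suc i))..max (?g i) (?g (Suc i))} \<subseteq> S" if "i < ?n" for i
    using edge p that unfolding is_path_def by simp
  moreover have "?g 0 \<in> S"
    using assms(2) \<open>p \<noteq> []\<close> by (simp add: hd_conv_nth)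
  ultimately have "{min (?g 0) (?g ?n)..max (?g 0) (?g ?n)} \<subseteq> S"
    by (rule interval_chain_subset[rotated])
  then show ?thesis
    using \<open>p \<noteq> []\<close> by (simp add: hd_conv_nth last_conv_nth)
qed

lemma unicyclic_tau_jump_interval:
  assumes u: "unicyclic V E" and xy: "E x y" and jump: "tau V E x + 2 \<le> tau V E y"
  shows "{tau V E x..tau V E y} \<subseteq> tau V E ` V"
proof -
  have sg: "simple_graph V E"
    using u unfolding unicyclic_def by simp
  obtain P where P: "is_path V E P" "hd P = y" "length P = tau V E y"
    using tau_attained[OF sg simple_graphD(3)[OF sg xy]] .
  obtain j where j: "2 \<le> j" "j < length P" "P ! j = x"
    using longest_path_contains_jump_neighbour[OF sg xy jump P] .
  let ?c = "take (Suc j) P" and ?g = "\<lambda>i. tau V E (P ! (j + i))" and ?n = "length P - Suc j"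
  have c: "is_cycle_seq V E ?c"
    using is_cycle_seq_take(1)[OF P(1) j(1,2)] xy j(3) P(2) by simp
  have PV: "set P \<subseteq> V" and Pdist: "distinct P" and Pne: "P \<noteq> []"
    using P(1) unfolding is_path_def by auto
  have "{min (?g i) (?g (Suc i))..max (?g i) (?g (Suc i))} \<subseteq> tau V E ` V" if "i < ?n" for i
  proof -
    have edge: "E (P ! (j + i)) (P ! Suc (j + i))"
      using P(1) that unfolding is_path_def by simp
    have "P ! Suc (j + i) \<in> set (drop (Suc j) P)"
      using that by (auto simp: in_set_conv_nth intro: exI[of _ i])
    then have "P ! Suc (j + i) \<notin> set ?c"
      using set_take_disj_set_drop_if_distinct[OF Pdist] by blast
    from unicyclic_tau_step_off_cycle[OF u c edge this]
    have "{min (?g i) (?g (Suc i))..max (?g i) (?g (Suc i))} \<subseteq> {?g i, ?g (Suc i)}"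
      by auto
    also have "\<dots> \<subseteq> tau V E ` V"
      using PV that nth_mem[of "j + i" P] nth_mem[of "Suc (j + i)" P] by fastforce
    finally show ?thesis .
  qed
  moreover have "?g 0 \<in> tau V E ` V"
    using j PV nth_mem[of j P] by auto
  ultimately have "{min (?g 0) (?g ?n)..max (?g 0) (?g ?n)} \<subseteq> tau V E ` V"
    by (rule interval_chain_subset[rotated])
  moreover have "?g 0 = tau V E x" "?g ?n = tau V E (last P)"
    using j Pne by (simp_all add: last_conv_nth)
  moreover have "tau V E y \<le> tau V E (last P)"
    using length_le_tau[OF sg is_path_rev[OF sg P(1)]] P j by (simp add: hd_rev)
  ultimately show ?thesis
    by auto
qed

lemma unicyclic_edge_tau_interval:
  assumes u: "unicyclic V E" and xy: "E x y"
  shows "{min (tau V E x) (tau V E y)..max (tau V E x) (tau V E y)} \<subseteq> tau V E ` V"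
proof -
  have sg: "simple_graph V E"
    using u unfolding unicyclic_def by simp
  consider "tau V E x + 2 \<le> tau V E y" | "tau V E y + 2 \<le> tau V E x"
    | "tau V E x \<le> tau V E y + 1 \<and> tau V E y \<le> tau V E x + 1"
    by linarith
  then show ?thesis
  proof cases
    case 1
    then show ?thesis
      using unicyclic_tau_jump_interval[OF u xy] by simp
  next
    case 2
    then show ?thesis
      using unicyclic_tau_jump_interval[OF u simple_graphD(4)[OF sg xy]] by simp
  next
    case 3
    then have "{min (tau V E x) (tau V E y)..max (tau V E x) (tau V E y)} \<subseteq> {tau V E x, tau V E y}"
      by (auto simp: min_def max_def)
    then show ?thesis
      using xy simple_graphD(2,3)[OF sg] by blast
  qed
qed

theorem theorem1p21:
  fixes V :: "'a set" and E :: "'a \<Rightarrow> 'a \<Rightarrow> bool"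
  assumes "unicyclic V E"
  defines "d \<equiv> detour_sequence V E"
  shows "\<forall>k::nat. hd d \<le> k \<and> k \<le> last d \<longrightarrow> (\<exists>j < length d. d ! j = k)"
proof -
  have sg: "simple_graph V E" and conn: "connected_graph V E"
    using assms(1) unfolding unicyclic_def by auto
  have set_d: "set d = tau V E ` V"
    unfolding d_def detour_sequence_def using simple_graphD(1)[OF sg] by simp
  then have "d \<noteq> []"
    using conn unfolding connected_graph_def by auto
  then obtain a b where ab: "a \<in> V" "hd d = tau V E a" "b \<in> V" "last d = tau V E b"
    using set_d hd_in_set last_in_set by (metis imageE)
  then obtain p where p: "is_path V E p" "hd p = a" "last p = b"
    using conn unfolding connected_graph_def by blast
  have "{min (tau V E a) (tau V E b)..max (tau V E a) (tau V E b)} \<subseteq> set d"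
    using is_path_interval_subset[OF p(1), of "tau V E"] unicyclic_edge_tau_interval[OF assms(1)]
      ab p set_d by auto
  then show ?thesis
    unfolding ab by (auto simp: in_set_conv_nth)
qed

end
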